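(* Let $P,K:\mathbb{N}_0\to\mathbb{N}_0$ be a scaling with $\lim_{n\to\infty}K_n^2/P_n=0$, and let $p:\mathbb{N}_0\to[0,1]$ satisfy $p_n\sim 1-q(\theta_n)$. Then $$\frac{C_{\rm K}(\theta_n)}{p_n}\sim 1+\frac{P_n}{K_n^3}.$$
   Context: For positive integers $K\le P$, $\theta=(K,P)$: $q(\theta)=\binom{P-K}{K}/\binom{P}{K}$ if $2K\le P$ and $0$ otherwise; $r(\theta)=\binom{P-2K}{K}/\binom{P}{K}$ if $3K\le P$ and $0$ otherwise; $\beta(\theta)=(1-q)^3+q^3-qr$; $C_{\rm K}(\theta)=\beta(\theta)/(1-q(\theta))^2$ is the clustering coefficient $\mathbb{P}[E_{12}\mid E_{13}\cap E_{23}]$ of the random key graph (nodes receive i.i.d. uniform $K$-subsets of $\{1,\dots,P\}$, adjacent iff subsets intersect). $p_n$ equals the clustering coefficient $C_{\rm ER}(p_n)$ of the Erdős–Rényi graph $\mathbb{G}(n;p_n)$. A scaling is a pair $P,K:\mathbb{N}_0\to\mathbb{N}_0$ with $1\le K_n\le P_n$, and $\theta_n=(K_n,P_n)$; $a_n\sim b_n$ means $a_n/b_n\to1$. *)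

theory Defs
  imports "HOL-Analysis.Analysis" "HOL-Library.Landau_Symbols"
begin

definition qK :: "nat \<Rightarrow> nat \<Rightarrow> real" where
  "qK K P = (if 2 * K \<le> P then real ((P - K) choose K) / real (P choose K) else 0)"

definition rK :: "nat \<Rightarrow> nat \<Rightarrow> real" where
  "rK K P = (if 3 * K \<le> P then real ((P - 2 * K) choose K) / real (P choose K) else 0)"

definition betaK :: "nat \<Rightarrow> nat \<Rightarrow> real" where
  "betaK K P = (1 - qK K P) ^ 3 + (qK K P) ^ 3 - qK K P * rK K P"

definition CK :: "nat \<Rightarrow> nat \<Rightarrow> real" where
  "CK K P = betaK K P / (1 - qK K P) ^ 2"

end

theory Submission
  imports Defs
begin

text \<open>
  Writing \<open>a\<^sub>i = K / (P - i)\<close> for \<open>i < K\<close>, the binomial ratios are products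
  \<open>q = \<Prod>(1 - a\<^sub>i)\<close> and \<open>r = \<Prod>(1 - 2a\<^sub>i)\<close>. Since every \<open>a\<^sub>i\<close> is \<open>K/P\<close> up to a
  factor \<open>1 + O(K/P)\<close>, elementary product inequalities give \<open>1 - q \<sim> K\<^sup>2/P\<close> and,
  via \<open>(1 - a)\<^sup>2 = (1 - 2a)(1 + a\<^sup>2/(1 - 2a))\<close>, \<open>q\<^sup>2 - r \<sim> K\<^sup>3/P\<^sup>2\<close>. Now
  \<open>C\<^sub>K = (1 - q)(1 + Z)\<close> with \<open>Z = q(q\<^sup>2 - r)/(1 - q)\<^sup>3 \<sim> P/K\<^sup>3\<close>, and \<open>1 - q \<sim> p\<close>.
\<close>

lemma one_minus_sum_le_prod_one_minus:
  fixes x :: "'a \<Rightarrow> real"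
  assumes "finite A" "\<And>i. i \<in> A \<Longrightarrow> 0 \<le> x i \<and> x i \<le> 1"
  shows "1 - sum x A \<le> (\<Prod>i\<in>A. 1 - x i)"
  using assms
proof (induction A rule: finite_induct)
  case (insert a A)
  have IH: "1 - sum x A \<le> (\<Prod>i\<in>A. 1 - x i)" and xa: "0 \<le> x a" "x a \<le> 1"
    using insert by auto
  have "0 \<le> sum x A" using insert by (auto intro: sum_nonneg)
  then have "1 - sum x A - x a \<le> (1 - x a) * (1 - sum x A)"
    using xa by (simp add: algebra_simps)
  also have "\<dots> \<le> (1 - x a) * (\<Prod>i\<in>A. 1 - x i)"
    using IH xa by (intro mult_left_mono) auto
  finally show ?case using insert by simp
qed simp

lemma one_plus_sum_le_prod_one_plus:
  fixes x :: "'a \<Rightarrow> real"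
  assumes "finite A" "\<And>i. i \<in> A \<Longrightarrow> 0 \<le> x i"
  shows "1 + sum x A \<le> (\<Prod>i\<in>A. 1 + x i)"
  using assms
proof (induction A rule: finite_induct)
  case (insert a A)
  have IH: "1 + sum x A \<le> (\<Prod>i\<in>A. 1 + x i)" and xa: "0 \<le> x a"
    using insert by auto
  have "0 \<le> sum x A" using insert by (auto intro: sum_nonneg)
  then have "1 + sum x A + x a \<le> (1 + x a) * (1 + sum x A)"
    using xa by (simp add: algebra_simps)
  also have "\<dots> \<le> (1 + x a) * (\<Prod>i\<in>A. 1 + x i)"
    using IH xa by (intro mult_left_mono) auto
  finally show ?case using insert by simp
qed simp

lemma prod_one_plus_le_exp_sum:
  fixes x :: "'a \<Rightarrow> real"
  assumes "finite A" "\<And>i. i \<in> A \<Longrightarrow> 0 \<le> 1 + x i"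
  shows "(\<Prod>i\<in>A. 1 + x i) \<le> exp (sum x A)"
proof -
  have "(\<Prod>i\<in>A. 1 + x i) \<le> (\<Prod>i\<in>A. exp (x i))"
    using assms by (intro prod_mono) auto
  then show ?thesis by (simp add: exp_sum assms(1))
qed

lemma one_minus_prod_one_minus_bounds:
  fixes x :: "'a \<Rightarrow> real"
  assumes A: "finite A" and x: "\<And>i. i \<in> A \<Longrightarrow> 0 \<le> x i \<and> x i \<le> 1"
  defines "S \<equiv> sum x A"
  shows "S / (1 + S) \<le> 1 - (\<Prod>i\<in>A. 1 - x i)" and "1 - (\<Prod>i\<in>A. 1 - x i) \<le> S"
proof -
  have S: "0 \<le> S" unfolding S_def using x by (auto intro: sum_nonneg)
  have "(\<Prod>i\<in>A. 1 - x i) \<le> exp (- S)"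
    using prod_one_plus_le_exp_sum[of A "\<lambda>i. - x i"] A x by (simp add: S_def sum_negf)
  also have "\<dots> \<le> 1 / (1 + S)"
    using exp_ge_add_one_self[of S] S by (simp add: exp_minus field_simps)
  finally show "S / (1 + S) \<le> 1 - (\<Prod>i\<in>A. 1 - x i)"
    using S by (simp add: field_simps)
  show "1 - (\<Prod>i\<in>A. 1 - x i) \<le> S"
    using one_minus_sum_le_prod_one_minus[of A x] A x by (simp add: S_def)
qed

lemma prod_one_plus_minus_one_bounds:
  fixes b :: "'a \<Rightarrow> real"
  assumes A: "finite A" and b: "\<And>i. i \<in> A \<Longrightarrow> 0 \<le> b i"
  defines "\<sigma> \<equiv> sum b A"
  assumes \<sigma>: "\<sigma> < 1"
  shows "\<sigma> \<le> (\<Prod>i\<in>A. 1 + b i) - 1" and "(\<Prod>i\<in>A. 1 + b i) - 1 \<le> \<sigma> / (1 - \<sigma>)"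
proof -
  show "\<sigma> \<le> (\<Prod>i\<in>A. 1 + b i) - 1"
    using one_plus_sum_le_prod_one_plus[of A b] A b by (simp add: \<sigma>_def)
  have "(\<Prod>i\<in>A. 1 + b i) \<le> exp \<sigma>"
    using prod_one_plus_le_exp_sum[of A b] A b by (force simp: \<sigma>_def)
  also have "\<dots> \<le> 1 / (1 - \<sigma>)"
    using exp_ge_add_one_self[of "- \<sigma>"] \<sigma> by (simp add: exp_minus field_simps)
  finally show "(\<Prod>i\<in>A. 1 + b i) - 1 \<le> \<sigma> / (1 - \<sigma>)"
    using \<sigma> by (simp add: field_simps)
qed

lemma sq_prod_one_minus_minus_prod_bounds:
  fixes x :: "'a \<Rightarrow> real"
  assumes A: "finite A" and x: "\<And>i. i \<in> A \<Longrightarrow> 0 \<le> x i \<and> 2 * x i < 1"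
  defines "\<sigma> \<equiv> (\<Sum>i\<in>A. x i ^ 2 / (1 - 2 * x i))"
  assumes \<sigma>: "\<sigma> < 1"
  shows "(\<Prod>i\<in>A. 1 - 2 * x i) * \<sigma> \<le> (\<Prod>i\<in>A. 1 - x i) ^ 2 - (\<Prod>i\<in>A. 1 - 2 * x i)"
    and "(\<Prod>i\<in>A. 1 - x i) ^ 2 - (\<Prod>i\<in>A. 1 - 2 * x i) \<le> \<sigma> / (1 - \<sigma>)"
proof -
  define b where "b i = x i ^ 2 / (1 - 2 * x i)" for i
  define r where "r = (\<Prod>i\<in>A. 1 - 2 * x i)"
  define B where "B = (\<Prod>i\<in>A. 1 + b i)"
  have b: "0 \<le> b i" if "i \<in> A" for i
    using x[OF that] by (simp add: b_def)
  have "(\<Prod>i\<in>A. 1 - x i) ^ 2 = (\<Prod>i\<in>A. (1 - x i) ^ 2)"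
    by (simp add: prod_power_distrib)
  also have "\<dots> = (\<Prod>i\<in>A. (1 - 2 * x i) * (1 + b i))"
  proof (rule prod.cong)
    fix i assume "i \<in> A"
    then have "1 - 2 * x i \<noteq> 0" using x by fastforce
    then show "(1 - x i) ^ 2 = (1 - 2 * x i) * (1 + b i)"
      by (simp add: b_def field_simps power2_eq_square)
  qed simp
  finally have "(\<Prod>i\<in>A. 1 - x i) ^ 2 = r * B"
    by (simp add: prod.distrib r_def B_def)
  then have eq: "(\<Prod>i\<in>A. 1 - x i) ^ 2 - r = r * (B - 1)"
    by (simp add: algebra_simps)
  have r: "0 \<le> r" "r \<le> 1"
    unfolding r_def using x by (auto intro!: prod_nonneg prod_le_1 simp: less_imp_le)
  have B: "\<sigma> \<le> B - 1" "B - 1 \<le> \<sigma> / (1 - \<sigma>)"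
    using prod_one_plus_minus_one_bounds[of A b] A b \<sigma> by (simp_all add: B_def \<sigma>_def b_def)
  show "r * \<sigma> \<le> (\<Prod>i\<in>A. 1 - x i) ^ 2 - r"
    unfolding eq using r B by (intro mult_left_mono) auto
  have "0 \<le> \<sigma>" unfolding \<sigma>_def using b by (auto simp: b_def intro: sum_nonneg)
  then have "r * (B - 1) \<le> B - 1" using r B by (intro mult_left_le_one_le) auto
  with B show "(\<Prod>i\<in>A. 1 - x i) ^ 2 - r \<le> \<sigma> / (1 - \<sigma>)"
    unfolding eq by linarith
qed

lemma sum_sq_div_one_minus_twice_bounds:
  fixes a :: "'a \<Rightarrow> real" and t :: real
  assumes A: "finite A" and t: "0 < t" "t < 1/3"
    and a: "\<And>i. i \<in> A \<Longrightarrow> t \<le> a i \<and> a i \<le> t / (1 - t)"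
  shows "real (card A) * t ^ 2 \<le> (\<Sum>i\<in>A. a i ^ 2 / (1 - 2 * a i))"
    and "(\<Sum>i\<in>A. a i ^ 2 / (1 - 2 * a i)) \<le> real (card A) * t ^ 2 / ((1 - t) * (1 - 3 * t))"
proof -
  have "t ^ 2 \<le> a i ^ 2 / (1 - 2 * a i)" if "i \<in> A" for i
  proof -
    have "2 * (t / (1 - t)) < 1" using t by (simp add: field_simps)
    then have d: "0 < 1 - 2 * a i" "1 - 2 * a i \<le> 1" using a[OF that] t by linarith+
    have "t ^ 2 \<le> a i ^ 2" using a[OF that] t by (intro power_mono) auto
    also have "\<dots> \<le> a i ^ 2 / (1 - 2 * a i)"
      using d by (simp add: le_divide_eq mult_left_le)
    finally show ?thesis .
  qed
  then show "real (card A) * t ^ 2 \<le> (\<Sum>i\<in>A. a i ^ 2 / (1 - 2 * a i))"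
    using sum_mono[of A "\<lambda>_. t ^ 2"] by simp
  have "a i ^ 2 / (1 - 2 * a i) \<le> t ^ 2 / ((1 - t) * (1 - 3 * t))" if "i \<in> A" for i
  proof -
    have "a i ^ 2 / (1 - 2 * a i) \<le> (t / (1 - t)) ^ 2 / (1 - 2 * (t / (1 - t)))"
      using a[OF that] t by (intro frac_le power_mono) (auto simp: field_simps)
    also have "1 - 2 * (t / (1 - t)) = (1 - 3 * t) / (1 - t)"
      using t by (simp add: field_simps)
    finally show ?thesis
      using t by (simp add: divide_simps power2_eq_square)
  qed
  then show "(\<Sum>i\<in>A. a i ^ 2 / (1 - 2 * a i)) \<le> real (card A) * t ^ 2 / ((1 - t) * (1 - 3 * t))"
    using sum_mono[of A _ "\<lambda>_. t ^ 2 / ((1 - t) * (1 - 3 * t))"] by simp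
qed

lemma asymp_equiv_sandwich_factors:
  fixes f g l h :: "'a \<Rightarrow> real"
  assumes "(l \<longlongrightarrow> 1) F" "(h \<longlongrightarrow> 1) F"
    and "eventually (\<lambda>x. g x * l x \<le> f x \<and> f x \<le> g x * h x) F"
  shows "f \<sim>[F] g"
proof (rule asymp_equiv_sandwich_real)
  have "(\<lambda>x. g x * l x) \<sim>[F] (\<lambda>x. g x * 1)" "(\<lambda>x. g x * h x) \<sim>[F] (\<lambda>x. g x * 1)"
    using assms(1,2) by (intro asymp_equiv_mult asymp_equiv_refl tendsto_imp_asymp_equiv_const; simp)+
  then show "(\<lambda>x. g x * l x) \<sim>[F] g" "(\<lambda>x. g x * h x) \<sim>[F] g"
    by simp_all
  show "eventually (\<lambda>x. f x \<in> {g x * l x..g x * h x}) F"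
    using assms(3) by simp
qed

lemma asymp_equiv_one_plus:
  fixes f g :: "'a \<Rightarrow> real"
  assumes "f \<sim>[F] g" and "eventually (\<lambda>x. 0 \<le> g x) F"
  shows "(\<lambda>x. 1 + f x) \<sim>[F] (\<lambda>x. 1 + g x)"
proof (rule smallo_imp_asymp_equiv)
  have "g \<in> O[F](\<lambda>x. 1 + g x)"
    using assms(2) by (intro bigoI[of _ 1]) (auto elim!: eventually_mono)
  with asymp_equiv_imp_diff_smallo[OF assms(1)]
  show "(\<lambda>x. (1 + f x) - (1 + g x)) \<in> o[F](\<lambda>x. 1 + g x)"
    by (simp add: landau_o.small_big_trans)
qed

lemma binomial_ratio_eq_prod:
  assumes "m + K \<le> P"
  shows "real ((P - m) choose K) / real (P choose K) = (\<Prod>i<K. 1 - real m / (real P - real i))"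
proof -
  have binomial: "real (n choose K) = (\<Prod>i<K. real n - real i) / fact K" for n
    by (simp add: binomial_gbinomial gbinomial_prod_rev atLeast0LessThan)
  have "real ((P - m) choose K) / real (P choose K)
      = (\<Prod>i<K. real (P - m) - real i) / (\<Prod>i<K. real P - real i)"
    by (simp add: binomial)
  also have "\<dots> = (\<Prod>i<K. (real (P - m) - real i) / (real P - real i))"
    by (simp add: prod_dividef)
  also have "\<dots> = (\<Prod>i<K. 1 - real m / (real P - real i))"
    using assms by (intro prod.cong) (auto simp: field_simps of_nat_diff)
  finally show ?thesis .
qed

lemma qK_eq_prod: "2 * K \<le> P \<Longrightarrow> qK K P = (\<Prod>i<K. 1 - real K / (real P - real i))"
  using binomial_ratio_eq_prod[of K K P] by (simp add: qK_def)

lemma rK_eq_prod: "3 * K \<le> P \<Longrightarrow> rK K P = (\<Prod>i<K. 1 - 2 * (real K / (real P - real i)))"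
  using binomial_ratio_eq_prod[of "2 * K" K P] by (simp add: rK_def)

lemma K_div_P_minus_bounds:
  fixes K P i :: nat
  assumes "i < K" "3 * K < P"
  defines "t \<equiv> real K / real P"
  shows "t \<le> real K / (real P - real i)" and "real K / (real P - real i) \<le> t / (1 - t)"
    and "t / (1 - t) < 1 / 2"
proof -
  have P: "real i < real K" "3 * real K < real P" using assms(1,2) by linarith+
  have "t / (1 - t) = real K / (real P - real K)"
    using P by (simp add: t_def field_simps)
  moreover have "real K / (real P - real i) \<le> real K / (real P - real K)"
    using P by (intro divide_left_mono) auto
  moreover have "real K / (real P - real K) < 1 / 2"
    using P by (simp add: field_simps)
  ultimately show "real K / (real P - real i) \<le> t / (1 - t)" "t / (1 - t) < 1 / 2"
    by simp_all
  show "t \<le> real K / (real P - real i)"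
    using P by (auto simp: t_def intro!: divide_left_mono)
qed

lemma sum_K_div_P_minus_bounds:
  fixes K P :: nat
  assumes KP: "3 * K < P"
  defines "t \<equiv> real K / real P" and "D \<equiv> real K ^ 2 / real P"
  shows "D \<le> (\<Sum>i<K. real K / (real P - real i))"
    and "(\<Sum>i<K. real K / (real P - real i)) \<le> D / (1 - t)"
proof -
  note a = K_div_P_minus_bounds[OF _ KP, folded t_def]
  have D: "D = real K * t" by (simp add: D_def t_def power2_eq_square)
  have "(\<Sum>i<K. t) \<le> (\<Sum>i<K. real K / (real P - real i))"
    by (rule sum_mono) (use a in auto)
  then show "D \<le> (\<Sum>i<K. real K / (real P - real i))" by (simp add: D)
  have "(\<Sum>i<K. real K / (real P - real i)) \<le> (\<Sum>i<K. t / (1 - t))"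
    by (rule sum_mono) (use a in auto)
  then show "(\<Sum>i<K. real K / (real P - real i)) \<le> D / (1 - t)" by (simp add: D)
qed

lemma one_minus_qK_bounds:
  fixes K P :: nat
  assumes K: "1 \<le> K" and KP: "3 * K < P"
  defines "t \<equiv> real K / real P" and "D \<equiv> real K ^ 2 / real P"
  shows "D * (1 / (1 + D / (1 - t))) \<le> 1 - qK K P" and "1 - qK K P \<le> D * (1 / (1 - t))"
proof -
  define a where "a i = real K / (real P - real i)" for i
  define S where "S = (\<Sum>i<K. a i)"
  note a = K_div_P_minus_bounds[OF _ KP, folded t_def a_def]
  have t: "0 < t" "t < 1/3" using K KP by (auto simp: t_def field_simps)
  have D: "0 < D" using K KP by (simp add: D_def)
  have S: "D \<le> S" "S \<le> D / (1 - t)"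
    using sum_K_div_P_minus_bounds[OF KP] by (simp_all add: S_def a_def t_def D_def)
  have u: "S / (1 + S) \<le> 1 - qK K P" "1 - qK K P \<le> S"
    using one_minus_prod_one_minus_bounds[of "{..<K}" a] a t KP
    by (auto simp: S_def a_def qK_eq_prod)
  have "D / (1 + D / (1 - t)) \<le> D / (1 + S)"
    using S D by (intro divide_left_mono) auto
  also have "\<dots> \<le> S / (1 + S)"
    using S D by (intro divide_right_mono) auto
  finally show "D * (1 / (1 + D / (1 - t))) \<le> 1 - qK K P" using u by simp
  show "1 - qK K P \<le> D * (1 / (1 - t))" using u S by simp
qed

lemma qK_sq_minus_rK_bounds:
  fixes K P :: nat
  assumes K: "1 \<le> K" and KP: "3 * K < P"
  defines "t \<equiv> real K / real P" and "D \<equiv> real K ^ 2 / real P"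
    and "E \<equiv> real K ^ 3 / real P ^ 2"
  defines "M \<equiv> 1 / ((1 - t) * (1 - 3 * t))"
  assumes EM: "E * M < 1"
  shows "E * (1 - 2 * (D / (1 - t))) \<le> qK K P ^ 2 - rK K P"
    and "qK K P ^ 2 - rK K P \<le> E * (M / (1 - E * M))"
proof -
  define a where "a i = real K / (real P - real i)" for i
  define \<sigma> where "\<sigma> = (\<Sum>i<K. a i ^ 2 / (1 - 2 * a i))"
  note a = K_div_P_minus_bounds[OF _ KP, folded t_def a_def]
  have t: "0 < t" "t < 1/3" using K KP by (auto simp: t_def field_simps)
  have E: "0 < E" "E = real K * t ^ 2" using K KP by (auto simp: E_def t_def power2_eq_square power3_eq_cube)
  have a2: "0 \<le> a i \<and> 2 * a i < 1" if "i < K" for i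
    using a[OF that] t by (intro conjI) linarith+
  have q: "qK K P = (\<Prod>i<K. 1 - a i)" and r: "rK K P = (\<Prod>i<K. 1 - 2 * a i)"
    using KP by (simp_all add: qK_eq_prod rK_eq_prod a_def)
  have "E \<le> \<sigma>" "\<sigma> \<le> real K * t ^ 2 / ((1 - t) * (1 - 3 * t))"
    using sum_sq_div_one_minus_twice_bounds[of "{..<K}" t a] a t
    by (simp_all add: \<sigma>_def E)
  then have \<sigma>: "E \<le> \<sigma>" "\<sigma> \<le> E * M" by (simp_all add: E M_def)
  have v: "rK K P * \<sigma> \<le> qK K P ^ 2 - rK K P" "qK K P ^ 2 - rK K P \<le> \<sigma> / (1 - \<sigma>)"
    using sq_prod_one_minus_minus_prod_bounds[of "{..<K}" a] a2 \<sigma> EM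
    unfolding q r \<sigma>_def by auto
  have "1 - 2 * (\<Sum>i<K. a i) \<le> rK K P"
    using one_minus_sum_le_prod_one_minus[of "{..<K}" "\<lambda>i. 2 * a i"] a2
    by (force simp: r sum_distrib_left)
  moreover have "(\<Sum>i<K. a i) \<le> D / (1 - t)"
    using sum_K_div_P_minus_bounds(2)[OF KP] by (simp add: a_def t_def D_def)
  ultimately have "E * (1 - 2 * (D / (1 - t))) \<le> E * rK K P"
    using E by (intro mult_left_mono) auto
  also have "\<dots> \<le> \<sigma> * rK K P"
    using \<sigma> a2 unfolding r by (intro mult_right_mono prod_nonneg) (auto simp: less_imp_le)
  finally show "E * (1 - 2 * (D / (1 - t))) \<le> qK K P ^ 2 - rK K P"
    using v by (simp add: mult.commute)
  have "\<sigma> / (1 - \<sigma>) \<le> E * M / (1 - E * M)"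
    using \<sigma> E EM by (intro frac_le) auto
  with v show "qK K P ^ 2 - rK K P \<le> E * (M / (1 - E * M))"
    by simp
qed

lemma CK_eq_one_minus_qK_times:
  assumes "qK K P \<noteq> 1"
  shows "CK K P = (1 - qK K P) * (1 + qK K P * (qK K P ^ 2 - rK K P) / (1 - qK K P) ^ 3)"
proof -
  define u where "u = 1 - qK K P"
  define w where "w = qK K P * (qK K P ^ 2 - rK K P)"
  have u: "u \<noteq> 0" using assms by (simp add: u_def)
  have "CK K P = (u ^ 3 + w) / u ^ 2"
    by (simp add: CK_def betaK_def u_def w_def algebra_simps power2_eq_square power3_eq_cube)
  also have "\<dots> = u * (1 + w / u ^ 3)"
    using u by (simp add: field_simps power2_eq_square power3_eq_cube)
  finally show ?thesis by (simp add: u_def w_def)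
qed

context
  fixes K P :: "nat \<Rightarrow> nat"
  assumes scaling: "\<And>n. 1 \<le> K n \<and> K n \<le> P n"
    and sparse: "(\<lambda>n. real (K n) ^ 2 / real (P n)) \<longlonglongrightarrow> 0"
begin

lemma K_div_P_tendsto_0: "(\<lambda>n. real (K n) / real (P n)) \<longlonglongrightarrow> 0"
proof (rule tendsto_sandwich[OF _ _ tendsto_const sparse])
  have "real (K n) / real (P n) \<le> real (K n) ^ 2 / real (P n)" for n
    using scaling[of n] by (intro divide_right_mono) (auto simp: power2_eq_square)
  then show "eventually (\<lambda>n. real (K n) / real (P n) \<le> real (K n) ^ 2 / real (P n)) sequentially"
    by simp
qed simp

lemma eventually_3K_less_P: "eventually (\<lambda>n. 3 * K n < P n) sequentially"
  using order_tendstoD(2)[OF K_div_P_tendsto_0, of "1/3"]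
proof (rule eventually_mono, simp)
  fix n assume "real (K n) / real (P n) < 1/3"
  then show "3 * K n < P n" using scaling[of n] by (simp add: field_simps)
qed

lemma one_minus_qK_asymp_equiv:
  "(\<lambda>n. 1 - qK (K n) (P n)) \<sim>[sequentially] (\<lambda>n. real (K n) ^ 2 / real (P n))"
proof -
  define t where "t = (\<lambda>n. real (K n) / real (P n))"
  define D where "D = (\<lambda>n. real (K n) ^ 2 / real (P n))"
  have t0: "t \<longlonglongrightarrow> 0" and D0: "D \<longlonglongrightarrow> 0"
    using K_div_P_tendsto_0 sparse by (simp_all add: t_def D_def)
  have "(\<lambda>n. 1 - qK (K n) (P n)) \<sim>[sequentially] D"
  proof (rule asymp_equiv_sandwich_factors)
    show "(\<lambda>n. 1 / (1 + D n / (1 - t n))) \<longlonglongrightarrow> 1" "(\<lambda>n. 1 / (1 - t n)) \<longlonglongrightarrow> 1"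
      by (auto intro!: tendsto_eq_intros t0 D0)
    show "eventually (\<lambda>n. D n * (1 / (1 + D n / (1 - t n))) \<le> 1 - qK (K n) (P n)
        \<and> 1 - qK (K n) (P n) \<le> D n * (1 / (1 - t n))) sequentially"
      using eventually_3K_less_P
      by eventually_elim (use scaling one_minus_qK_bounds in \<open>auto simp: t_def D_def\<close>)
  qed
  then show ?thesis by (simp add: D_def)
qed

lemma qK_tendsto_1: "(\<lambda>n. qK (K n) (P n)) \<longlonglongrightarrow> 1"
proof -
  have "(\<lambda>n. 1 - qK (K n) (P n)) \<longlonglongrightarrow> 0"
    using asymp_equiv_tendsto_transfer[OF asymp_equiv_symI[OF one_minus_qK_asymp_equiv] sparse] .
  then have "(\<lambda>n. 1 - (1 - qK (K n) (P n))) \<longlonglongrightarrow> 1 - 0"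
    by (intro tendsto_intros)
  then show ?thesis by simp
qed

lemma qK_sq_minus_rK_asymp_equiv:
  "(\<lambda>n. qK (K n) (P n) ^ 2 - rK (K n) (P n)) \<sim>[sequentially] (\<lambda>n. real (K n) ^ 3 / real (P n) ^ 2)"
proof -
  define t where "t = (\<lambda>n. real (K n) / real (P n))"
  define D where "D = (\<lambda>n. real (K n) ^ 2 / real (P n))"
  define E where "E = (\<lambda>n. real (K n) ^ 3 / real (P n) ^ 2)"
  define M where "M = (\<lambda>n. 1 / ((1 - t n) * (1 - 3 * t n)))"
  have t0: "t \<longlonglongrightarrow> 0" and D0: "D \<longlonglongrightarrow> 0"
    using K_div_P_tendsto_0 sparse by (simp_all add: t_def D_def)
  have "E = (\<lambda>n. D n * t n)"
    by (auto simp: E_def D_def t_def power2_eq_square power3_eq_cube)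
  then have E0: "E \<longlonglongrightarrow> 0"
    using tendsto_mult[OF D0 t0] by simp
  have M1: "M \<longlonglongrightarrow> 1"
    unfolding M_def by (auto intro!: tendsto_eq_intros t0)
  have EM0: "(\<lambda>n. E n * M n) \<longlonglongrightarrow> 0"
    using tendsto_mult[OF E0 M1] by simp
  have "(\<lambda>n. qK (K n) (P n) ^ 2 - rK (K n) (P n)) \<sim>[sequentially] E"
  proof (rule asymp_equiv_sandwich_factors)
    show "(\<lambda>n. 1 - 2 * (D n / (1 - t n))) \<longlonglongrightarrow> 1" "(\<lambda>n. M n / (1 - E n * M n)) \<longlonglongrightarrow> 1"
      by (auto intro!: tendsto_eq_intros t0 D0 E0 M1)
    show "eventually (\<lambda>n. E n * (1 - 2 * (D n / (1 - t n))) \<le> qK (K n) (P n) ^ 2 - rK (K n) (P n)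
        \<and> qK (K n) (P n) ^ 2 - rK (K n) (P n) \<le> E n * (M n / (1 - E n * M n))) sequentially"
      using eventually_3K_less_P order_tendstoD(2)[OF EM0 zero_less_one]
      by eventually_elim
        (use scaling qK_sq_minus_rK_bounds in \<open>auto simp: t_def D_def E_def M_def\<close>)
  qed
  then show ?thesis by (simp add: E_def)
qed

lemma qK_correction_asymp_equiv:
  "(\<lambda>n. qK (K n) (P n) * (qK (K n) (P n) ^ 2 - rK (K n) (P n)) / (1 - qK (K n) (P n)) ^ 3)
     \<sim>[sequentially] (\<lambda>n. real (P n) / real (K n) ^ 3)"
proof -
  have "(\<lambda>n. qK (K n) (P n) * (qK (K n) (P n) ^ 2 - rK (K n) (P n)) / (1 - qK (K n) (P n)) ^ 3)
      \<sim>[sequentially] (\<lambda>n. 1 * (real (K n) ^ 3 / real (P n) ^ 2) / (real (K n) ^ 2 / real (P n)) ^ 3)"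
    by (intro asymp_equiv_intros tendsto_imp_asymp_equiv_const qK_tendsto_1
        qK_sq_minus_rK_asymp_equiv one_minus_qK_asymp_equiv) simp
  also have "\<dots> = (\<lambda>n. real (P n) / real (K n) ^ 3)"
  proof
    fix n
    have "real (K n) > 0" "real (P n) > 0" using scaling[of n] by auto
    then show "1 * (real (K n) ^ 3 / real (P n) ^ 2) / (real (K n) ^ 2 / real (P n)) ^ 3
        = real (P n) / real (K n) ^ 3"
      by (simp add: field_simps power2_eq_square power3_eq_cube)
  qed
  finally show ?thesis .
qed

end

theorem corollary3:
  fixes K P :: "nat \<Rightarrow> nat" and p :: "nat \<Rightarrow> real"
  assumes scaling: "\<And>n. 1 \<le> K n \<and> K n \<le> P n"
    and lim: "(\<lambda>n. real (K n) ^ 2 / real (P n)) \<longlonglongrightarrow> 0"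
    and p_range: "\<And>n. 0 \<le> p n \<and> p n \<le> 1"
    and p_equiv: "p \<sim>[sequentially] (\<lambda>n. 1 - qK (K n) (P n))"
  shows "(\<lambda>n. CK (K n) (P n) / p n) \<sim>[sequentially]
           (\<lambda>n. 1 + real (P n) / real (K n) ^ 3)"
proof -
  define u where "u = (\<lambda>n. 1 - qK (K n) (P n))"
  define Z where "Z n = qK (K n) (P n) * (qK (K n) (P n) ^ 2 - rK (K n) (P n)) / u n ^ 3" for n
  have u_nz: "eventually (\<lambda>n. u n \<noteq> 0) sequentially"
    using asymp_equiv_eventually_zeros[OF one_minus_qK_asymp_equiv[OF scaling lim]]
  proof eventually_elim
    case (elim n)
    then show ?case using scaling[of n] by (simp add: u_def)
  qed
  have "(\<lambda>n. u n / p n) \<longlonglongrightarrow> 1"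
    using p_equiv[folded u_def] u_nz
    by (intro asymp_equivD_strong) (auto simp: asymp_equiv_sym elim!: eventually_mono)
  then have u_over_p: "(\<lambda>n. u n / p n) \<sim>[sequentially] (\<lambda>_. 1)"
    by (rule tendsto_imp_asymp_equiv_const) simp
  have "eventually (\<lambda>n. CK (K n) (P n) / p n = u n / p n * (1 + Z n)) sequentially"
    using u_nz by eventually_elim (simp add: CK_eq_one_minus_qK_times u_def Z_def)
  then have "(\<lambda>n. CK (K n) (P n) / p n) \<sim>[sequentially] (\<lambda>n. u n / p n * (1 + Z n))"
    by (rule asymp_equiv_refl_ev)
  also have "\<dots> \<sim>[sequentially] (\<lambda>n. 1 * (1 + real (P n) / real (K n) ^ 3))"
    using qK_correction_asymp_equiv[OF scaling lim] unfolding Z_def u_def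
    by (intro asymp_equiv_mult u_over_p[unfolded u_def] asymp_equiv_one_plus) auto
  finally show ?thesis by simp
qed

end
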